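(* For every integer $t$, \begin{align*} \sum_{n=1}^\infty(-1)^{n-1}\binom{2n}{n}\frac{O_n}{16^n}L_{2n+t}&=\frac{\alpha^t}{\sqrt{\alpha+5}}\ln\Bigl(\frac{\alpha+5}{4}\Bigr)+\frac{\beta^t}{\sqrt{\beta+5}}\ln\Bigl(\frac{\beta+5}{4}\Bigr),\\ \sum_{n=1}^\infty(-1)^{n-1}\binom{2n}{n}\frac{O_n}{16^n}F_{2n+t}&=\frac1{\sqrt5}\left(\frac{\alpha^t}{\sqrt{\alpha+5}}\ln\Bigl(\frac{\alpha+5}{4}\Bigr)-\frac{\beta^t}{\sqrt{\beta+5}}\ln\Bigl(\frac{\beta+5}{4}\Bigr)\right), \end{align*} and, for every gibonacci sequence $G_j=G_j(a,b)$, \[ \sum_{n=1}^\infty(-1)^{n-1}\binom{2n}{n}\frac{O_n}{16^n}G_{2n+t}=\frac1{\sqrt5}\left(\frac{(b-a\beta)\alpha^t}{\sqrt{\alpha+5}}\ln\Bigl(\frac{\alpha+5}{4}\Bigr)-\frac{(b-a\alpha)\beta^t}{\sqrt{\beta+5}}\ln\Bigl(\frac{\beta+5}{4}\Bigr)\right). \]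
   Context: $O_n=\sum_{j=1}^n\frac1{2j-1}$. $F_n$ and $L_n$ are the Fibonacci and Lucas numbers ($F_0=0,F_1=1$, $L_0=2,L_1=1$, $u_n=u_{n-1}+u_{n-2}$), extended to all integers by the recurrence. $\alpha=(1+\sqrt5)/2$, $\beta=-1/\alpha$. For numbers $a,b$ not both zero, the gibonacci sequence $G_j=G_j(a,b)$ is defined by $G_0=a$, $G_1=b$, $G_j=G_{j-1}+G_{j-2}$, extended to negative indices by $G_{-j}=G_{-(j-2)}-G_{-(j-1)}$; equivalently $G_j=\frac{(b-a\beta)\alpha^j+(a\alpha-b)\beta^j}{\alpha-\beta}$. *)

theory Defs
  imports "HOL-Analysis.Analysis"
begin

definition O_harm :: "nat \<Rightarrow> real" where
  "O_harm n = (\<Sum>j=1..n. 1 / (2 * real j - 1))"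

fun gib_pos :: "real \<Rightarrow> real \<Rightarrow> nat \<Rightarrow> real" where
  "gib_pos a b 0 = a"
| "gib_pos a b (Suc 0) = b"
| "gib_pos a b (Suc (Suc n)) = gib_pos a b (Suc n) + gib_pos a b n"

text \<open>Backward part: gib_neg a b j = G_{-j}, using G_{-j} = G_{-(j-2)} - G_{-(j-1)}.\<close>
fun gib_neg :: "real \<Rightarrow> real \<Rightarrow> nat \<Rightarrow> real" where
  "gib_neg a b 0 = a"
| "gib_neg a b (Suc 0) = b - a"
| "gib_neg a b (Suc (Suc n)) = gib_neg a b n - gib_neg a b (Suc n)"

definition gib :: "real \<Rightarrow> real \<Rightarrow> int \<Rightarrow> real" where
  "gib a b j = (if 0 \<le> j then gib_pos a b (nat j) else gib_neg a b (nat (- j)))"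

definition Fib :: "int \<Rightarrow> real" where "Fib j = gib 0 1 j"
definition Luc :: "int \<Rightarrow> real" where "Luc j = gib 2 1 j"

definition alpha :: real where "alpha = (1 + sqrt 5) / 2"
definition beta :: real where "beta = - 1 / alpha"

end

theory Submission
  imports Defs "HOL-Computational_Algebra.Formal_Power_Series"
begin

(* The series sum binom(2n,n) O_n x^n is the Cauchy product of
   sum binom(2n,n) x^n = 1/sqrt(1-4x) and sum 4^n x^n/(2n) = -ln(1-4x)/2: all three power series
   satisfy first-order equations (1-4x) F' = 2F + ..., which pin down the coefficient identity.
   Substituting x = -y/16 gives
     sum_{n>=1} (-1)^(n-1) binom(2n,n) O_n y^n / 16^n = ln((y+4)/4) / sqrt(y+4)   for |y| < 4.
   By Binet's formula G_(2n+t) = ((b - a beta) alpha^t (alpha^2)^n - (b - a alpha) beta^t (beta^2)^n) / sqrt 5,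
   and since alpha^2 = alpha + 1 and beta^2 = beta + 1 lie in (-4, 4), the series splits into two
   instances of the identity above, at y = alpha^2 and y = beta^2. *)

lemma central_binomial_Suc:
  "Suc n * (2 * Suc n choose Suc n) = 2 * (2 * n + 1) * (2 * n choose n)"
proof -
  have sym: "Suc (2 * n) choose n = Suc (2 * n) choose Suc n"
    using binomial_symmetric[of n "Suc (2 * n)"] by simp
  have "Suc n * (2 * Suc n choose Suc n) = 2 * (Suc n * (Suc (2 * n) choose Suc n))"
    using Suc_times_binomial[of n "Suc (2 * n)"] by (simp add: sym)
  also have "Suc n * (Suc (2 * n) choose Suc n) = Suc (2 * n) * (2 * n choose n)"
    using Suc_times_binomial[of n "2 * n"] by simp
  finally show ?thesis by simp
qed

lemma gbinomial_minus_half: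
  "((-1/2 :: real) gchoose n) * (-4) ^ n = real (2 * n choose n)"
proof -
  have "fact (2 * n) = (4 :: real) ^ n * pochhammer (1/2) n * fact n"
    using pochhammer_double[of "1/2 :: real" n]
    by (simp add: pochhammer_fact power_mult)
  moreover have "(-1 :: real) ^ n * (-4) ^ n = 4 ^ n"
    by (simp flip: power_mult_distrib)
  ultimately show ?thesis
    by (simp add: gbinomial_pochhammer binomial_fact field_simps)
qed

lemma central_binomial_sums:
  fixes x :: real
  assumes "\<bar>x\<bar> < 1/4"
  shows "(\<lambda>n. real (2 * n choose n) * x ^ n) sums (1 / sqrt (1 - 4 * x))"
proof -
  have "\<bar>-4 * x\<bar> < 1" using assms by simp
  from gen_binomial_real[OF this, of "-1/2"]
  have "(\<lambda>n. real (2 * n choose n) * x ^ n) sums (1 + -4 * x) powr (-1/2)"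
    by (simp only: power_mult_distrib mult.assoc[symmetric] gbinomial_minus_half)
  moreover have "(1 + -4 * x) powr (-1/2) = 1 / sqrt (1 - 4 * x)"
    using assms by (simp add: powr_minus_divide powr_half_sqrt)
  ultimately show ?thesis by simp
qed

(* The n = 0 coefficient is 4^0 / 0 = 0 in HOL, the constant term of the logarithm. *)
lemma half_ln_series_sums:
  fixes x :: real
  assumes "\<bar>x\<bar> < 1/4"
  shows "(\<lambda>n. 4 ^ n / (2 * real n) * x ^ n) sums (- ln (1 - 4 * x) / 2)"
proof -
  have "\<bar>-4 * x\<bar> < 1" using assms by simp
  from sums_divide[OF ln_series'[OF this], of "-2"]
  show ?thesis by (simp add: power_mult_distrib ac_simps)
qed

lemma fps_nth_one_minus_X_times_deriv:
  fixes F :: "'a :: comm_ring_1 fps"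
  shows "fps_nth ((1 - fps_const c * fps_X) * fps_deriv F) n
           = of_nat (Suc n) * fps_nth F (Suc n) - c * of_nat n * fps_nth F n"
  by (cases n) (simp_all add: algebra_simps)

lemma fps_eq_0_of_deriv_eq:
  fixes F :: "'a :: field_char_0 fps"
  assumes ode: "(1 - fps_const c * fps_X) * fps_deriv F = fps_const d * F"
    and F0: "fps_nth F 0 = 0"
  shows "F = 0"
proof (rule fps_ext)
  fix n
  show "fps_nth F n = fps_nth 0 n"
  proof (induction n)
    case 0
    from F0 show ?case by simp
  next
    case (Suc n)
    have "of_nat (Suc n) * fps_nth F (Suc n) - c * of_nat n * fps_nth F n = d * fps_nth F n"
      using arg_cong[OF ode, of "\<lambda>G. fps_nth G n"] by (simp add: fps_nth_one_minus_X_times_deriv)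
    with Suc have "of_nat (Suc n) * fps_nth F (Suc n) = 0" by simp
    then show ?case by (simp del: of_nat_Suc)
  qed
qed

lemma O_harm_Suc: "O_harm (Suc n) = O_harm n + 1 / (2 * real n + 1)"
  unfolding O_harm_def by simp

lemma central_binomial_odd_harmonic_convolution:
  "real (2 * n choose n) * O_harm n
     = (\<Sum>i\<le>n. real (2 * i choose i) * (4 ^ (n - i) / (2 * real (n - i))))"
proof -
  \<comment> \<open>C, L, A satisfy (1-4x)C' = 2C, (1-4x)L' = 2, (1-4x)A' = 2A + 2C; hence A - CL solves
     the homogeneous equation with zero constant term.\<close>
  define c where "c n = real (2 * n choose n)" for n
  define C where "C = Abs_fps c"
  define L where "L = Abs_fps (\<lambda>n. 4 ^ n / (2 * real n) :: real)"
  define A where "A = Abs_fps (\<lambda>n. c n * O_harm n)"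
  let ?D = "\<lambda>F. (1 - fps_const 4 * fps_X) * fps_deriv F"
  have c_Suc: "real (Suc n) * c (Suc n) = (4 * real n + 2) * c n" for n
    using arg_cong[OF central_binomial_Suc[of n], of real]
    unfolding c_def by (simp del: binomial_Suc_Suc add: algebra_simps)
  have C_ode: "?D C = fps_const 2 * C"
  proof (rule fps_ext)
    fix n
    show "fps_nth (?D C) n = fps_nth (fps_const 2 * C) n"
      using c_Suc[of n] by (simp add: C_def fps_nth_one_minus_X_times_deriv algebra_simps)
  qed
  have L_ode: "?D L = fps_const 2"
    by (rule fps_ext) (simp add: L_def fps_nth_one_minus_X_times_deriv field_simps)
  have A_ode: "?D A = fps_const 2 * A + fps_const 2 * C"
  proof (rule fps_ext)
    fix n
    have "real (Suc n) * c (Suc n) * O_harm (Suc n) = (4 * real n + 2) * c n * O_harm n + 2 * c n"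
      unfolding c_Suc O_harm_Suc by (simp add: field_simps)
    then show "fps_nth (?D A) n = fps_nth (fps_const 2 * A + fps_const 2 * C) n"
      by (simp add: A_def C_def fps_nth_one_minus_X_times_deriv algebra_simps)
  qed
  have "?D (A - C * L) = ?D A - (C * ?D L + ?D C * L)"
    by (simp add: algebra_simps)
  also have "\<dots> = fps_const 2 * (A - C * L)"
    unfolding A_ode L_ode C_ode by (simp add: algebra_simps)
  finally have "?D (A - C * L) = fps_const 2 * (A - C * L)" .
  then have "A - C * L = 0"
    by (rule fps_eq_0_of_deriv_eq) (simp add: A_def C_def L_def O_harm_def)
  then have "fps_nth A n = fps_nth (C * L) n" by simp
  then show ?thesis by (simp add: A_def C_def L_def c_def fps_mult_nth atLeast0AtMost)
qed

lemma central_binomial_odd_harmonic_sums: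
  fixes x :: real
  assumes "\<bar>x\<bar> < 1/4"
  shows "(\<lambda>n. real (2 * n choose n) * O_harm n * x ^ n)
           sums (- ln (1 - 4 * x) / (2 * sqrt (1 - 4 * x)))"
proof -
  have "\<bar>\<bar>x\<bar>\<bar> < 1/4" using assms by simp
  from sums_summable[OF central_binomial_sums[OF this]]
       sums_summable[OF half_ln_series_sums[OF this]]
  have "summable (\<lambda>n. norm (real (2 * n choose n) * x ^ n))"
    and "summable (\<lambda>n. norm (4 ^ n / (2 * real n) * x ^ n))"
    by (simp_all add: abs_mult power_abs)
  from Cauchy_product_sums[OF this]
  have "(\<lambda>n. \<Sum>i\<le>n. real (2 * i choose i) * x ^ i * (4 ^ (n - i) / (2 * real (n - i)) * x ^ (n - i)))
          sums (1 / sqrt (1 - 4 * x) * (- ln (1 - 4 * x) / 2))"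
    unfolding sums_unique[OF central_binomial_sums[OF assms], symmetric]
      sums_unique[OF half_ln_series_sums[OF assms], symmetric] .
  moreover have "(\<Sum>i\<le>n. real (2 * i choose i) * x ^ i * (4 ^ (n - i) / (2 * real (n - i)) * x ^ (n - i)))
                   = real (2 * n choose n) * O_harm n * x ^ n" for n
    unfolding central_binomial_odd_harmonic_convolution sum_distrib_right
    by (rule sum.cong) (auto simp: power_add[symmetric])
  ultimately show ?thesis
    by (simp add: mult.commute)
qed

lemma odd_harmonic_alternating_sums:
  fixes y :: real
  assumes "\<bar>y\<bar> < 4"
  shows "(\<lambda>n. (-1) ^ n * real (2 * Suc n choose Suc n) * O_harm (Suc n) / 16 ^ Suc n * y ^ Suc n)
           sums (ln ((y + 4) / 4) / sqrt (y + 4))"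
proof -
  define f where "f n = real (2 * n choose n) * O_harm n * (- y / 16) ^ n" for n
  have "\<bar>- y / 16\<bar> < 1/4" using assms by simp
  from central_binomial_odd_harmonic_sums[OF this]
  have "f sums (- ln ((y + 4) / 4) / (2 * sqrt ((y + 4) / 4)))"
    unfolding f_def by (simp add: field_simps)
  moreover have "f 0 = 0" by (simp add: f_def O_harm_def)
  ultimately have "(\<lambda>n. f (Suc n)) sums (- ln ((y + 4) / 4) / (2 * sqrt ((y + 4) / 4)))"
    by (simp add: sums_Suc_iff)
  from sums_minus[OF this]
  have "(\<lambda>n. - f (Suc n)) sums (ln ((y + 4) / 4) / (2 * sqrt ((y + 4) / 4)))"
    by simp
  moreover have "sqrt ((y + 4) / 4) = sqrt (y + 4) / 2"
    by (simp add: real_sqrt_divide)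
  ultimately show ?thesis
    by (simp add: f_def power_minus' power_divide mult_ac)
qed

lemma beta_eq: "beta = (1 - sqrt 5) / 2"
  unfolding beta_def alpha_def by (simp add: field_simps add_nonneg_eq_0_iff)

lemma alpha_squared: "alpha ^ 2 = alpha + 1"
  unfolding alpha_def power2_eq_square by (simp add: field_simps)

lemma beta_squared: "beta ^ 2 = beta + 1"
  unfolding beta_eq power2_eq_square by (simp add: field_simps)

lemma alpha_minus_beta: "alpha - beta = sqrt 5"
  unfolding alpha_def beta_eq by (simp add: field_simps)

lemma abs_golden_squares_less_4: "\<bar>alpha ^ 2\<bar> < 4" "\<bar>beta ^ 2\<bar> < 4"
proof -
  have "0 < sqrt (5 :: real)" "sqrt (5 :: real) < 3"
    by (simp_all add: real_less_lsqrt)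
  then have "\<bar>(1 + sqrt 5) / 2 + 1\<bar> < (4 :: real)" "\<bar>(1 - sqrt 5) / 2 + 1\<bar> < (4 :: real)"
    by argo+
  then show "\<bar>alpha ^ 2\<bar> < 4" "\<bar>beta ^ 2\<bar> < 4"
    unfolding alpha_squared beta_squared unfolding alpha_def beta_eq .
qed

lemma power_int_fib_rec:
  fixes x :: "'a :: field"
  assumes "x ^ 2 = x + 1"
  shows "x powi (j + 2) = x powi (j + 1) + x powi j"
proof -
  have "x \<noteq> 0" using assms by auto
  then have "x powi (j + 2) = x powi j * x ^ 2" and "x powi (j + 1) = x powi j * x"
    by (simp_all add: power_int_add)
  then show ?thesis using assms by (simp add: algebra_simps)
qed

lemma power_int_double_add:
  fixes x :: "'a :: field"
  assumes "x \<noteq> 0"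
  shows "x powi (2 * int m + t) = x powi t * (x ^ 2) ^ m"
proof -
  have "x powi (2 * int m + t) = x powi int (2 * m) * x powi t"
    using assms by (simp add: power_int_add)
  also have "x powi int (2 * m) = (x ^ 2) ^ m"
    by (simp only: power_int_of_nat power_mult)
  finally show ?thesis
    by (simp only: mult.commute)
qed

lemma gib_eqI:
  assumes "f 0 = a" "f 1 = b" "\<And>j. f (j + 2) = f (j + 1) + f j"
  shows "gib a b j = f j"
proof -
  have "gib_pos a b n = f (int n)" for n
    by (induction n rule: induct_nat_012)
       (use assms in \<open>simp_all add: algebra_simps\<close>)
  moreover have "gib_neg a b n = f (- int n)" for n
  proof (induction n rule: induct_nat_012)
    case 0
    show ?case using assms(1) by simp
  next
    case 1
    show ?case using assms(1,2) assms(3)[of "- 1"] by simp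
  next
    case (ge2 n)
    then show ?case using assms(3)[of "- int n - 2"] by (simp add: algebra_simps)
  qed
  ultimately show ?thesis unfolding gib_def by simp
qed

lemma gib_binet:
  "gib a b j = ((b - a * beta) * alpha powi j - (b - a * alpha) * beta powi j) / sqrt 5"
proof (rule gib_eqI)
  have alpha_eq: "alpha = beta + sqrt 5" using alpha_minus_beta by simp
  show "((b - a * beta) * alpha powi 0 - (b - a * alpha) * beta powi 0) / sqrt 5 = a"
    by (simp add: alpha_eq field_simps)
  show "((b - a * beta) * alpha powi 1 - (b - a * alpha) * beta powi 1) / sqrt 5 = b"
    by (simp add: alpha_eq field_simps)
  show "((b - a * beta) * alpha powi (j + 2) - (b - a * alpha) * beta powi (j + 2)) / sqrt 5
        = ((b - a * beta) * alpha powi (j + 1) - (b - a * alpha) * beta powi (j + 1)) / sqrt 5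
          + ((b - a * beta) * alpha powi j - (b - a * alpha) * beta powi j) / sqrt 5" for j
    unfolding power_int_fib_rec[OF alpha_squared] power_int_fib_rec[OF beta_squared]
    by (simp add: field_simps)
qed

lemma gib_odd_harmonic_sums:
  "(\<lambda>n. (-1) ^ n * real (2 * Suc n choose Suc n) * O_harm (Suc n) / 16 ^ Suc n
          * gib a b (2 * int (Suc n) + t))
     sums (1 / sqrt 5 * ((b - a * beta) * alpha powi t / sqrt (alpha + 5) * ln ((alpha + 5) / 4)
            - (b - a * alpha) * beta powi t / sqrt (beta + 5) * ln ((beta + 5) / 4)))"
proof -
  define w where "w n = (-1) ^ n * real (2 * Suc n choose Suc n) * O_harm (Suc n) / 16 ^ Suc n" for n
  have alpha_sums: "(\<lambda>n. w n * (alpha ^ 2) ^ Suc n) sums (ln ((alpha + 5) / 4) / sqrt (alpha + 5))"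
    using odd_harmonic_alternating_sums[OF abs_golden_squares_less_4(1)]
    unfolding w_def alpha_squared by (simp add: add.assoc)
  have beta_sums: "(\<lambda>n. w n * (beta ^ 2) ^ Suc n) sums (ln ((beta + 5) / 4) / sqrt (beta + 5))"
    using odd_harmonic_alternating_sums[OF abs_golden_squares_less_4(2)]
    unfolding w_def beta_squared by (simp add: add.assoc)
  have combined_sums: "(\<lambda>n. 1 / sqrt 5 * ((b - a * beta) * alpha powi t * (w n * (alpha ^ 2) ^ Suc n)
                                     - (b - a * alpha) * beta powi t * (w n * (beta ^ 2) ^ Suc n)))
     sums (1 / sqrt 5 * ((b - a * beta) * alpha powi t * (ln ((alpha + 5) / 4) / sqrt (alpha + 5))
                         - (b - a * alpha) * beta powi t * (ln ((beta + 5) / 4) / sqrt (beta + 5))))"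
    by (intro sums_mult sums_diff alpha_sums beta_sums)
  have "alpha \<noteq> 0" "beta \<noteq> 0"
    using alpha_squared beta_squared by auto
  then have term_eq: "w n * gib a b (2 * int (Suc n) + t)
               = 1 / sqrt 5 * ((b - a * beta) * alpha powi t * (w n * (alpha ^ 2) ^ Suc n)
                               - (b - a * alpha) * beta powi t * (w n * (beta ^ 2) ^ Suc n))" for n
    unfolding gib_binet power_int_double_add[OF \<open>alpha \<noteq> 0\<close>] power_int_double_add[OF \<open>beta \<noteq> 0\<close>]
    by (simp add: algebra_simps diff_divide_distrib add_divide_distrib)
  from combined_sums have "(\<lambda>n. w n * gib a b (2 * int (Suc n) + t))
     sums (1 / sqrt 5 * ((b - a * beta) * alpha powi t * (ln ((alpha + 5) / 4) / sqrt (alpha + 5))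
                         - (b - a * alpha) * beta powi t * (ln ((beta + 5) / 4) / sqrt (beta + 5))))"
    unfolding term_eq .
  then show ?thesis
    by (simp only: w_def times_divide_eq_right times_divide_eq_left)
qed

theorem theorem15:
  fixes t :: int
  shows "((\<lambda>m. let n = Suc m in (-1) ^ (n - 1) * real (2 * n choose n) * O_harm n / 16 ^ n
            * Luc (2 * int n + t))
          sums (alpha powi t / sqrt (alpha + 5) * ln ((alpha + 5) / 4)
                + beta powi t / sqrt (beta + 5) * ln ((beta + 5) / 4))) \<and>
         ((\<lambda>m. let n = Suc m in (-1) ^ (n - 1) * real (2 * n choose n) * O_harm n / 16 ^ n
            * Fib (2 * int n + t))
          sums (1 / sqrt 5 * (alpha powi t / sqrt (alpha + 5) * ln ((alpha + 5) / 4)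
                - beta powi t / sqrt (beta + 5) * ln ((beta + 5) / 4)))) \<and>
         (\<forall>a b. a \<noteq> 0 \<or> b \<noteq> 0 \<longrightarrow>
          (\<lambda>m. let n = Suc m in (-1) ^ (n - 1) * real (2 * n choose n) * O_harm n / 16 ^ n
            * gib a b (2 * int n + t))
          sums (1 / sqrt 5 * ((b - a * beta) * alpha powi t / sqrt (alpha + 5) * ln ((alpha + 5) / 4)
                - (b - a * alpha) * beta powi t / sqrt (beta + 5) * ln ((beta + 5) / 4))))"
proof -
  have gib_sums: "(\<lambda>m. let n = Suc m in (-1) ^ (n - 1) * real (2 * n choose n) * O_harm n / 16 ^ n
            * gib a b (2 * int n + t))
          sums (1 / sqrt 5 * ((b - a * beta) * alpha powi t / sqrt (alpha + 5) * ln ((alpha + 5) / 4)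
                - (b - a * alpha) * beta powi t / sqrt (beta + 5) * ln ((beta + 5) / 4)))" for a b
    using gib_odd_harmonic_sums[of a b t] by (simp only: Let_def diff_Suc_1)
  have Luc_coeffs: "1 - 2 * beta = sqrt 5" "1 - 2 * alpha = - sqrt 5"
    unfolding alpha_def beta_eq by (simp_all add: field_simps)
  have Luc_value: "1 / sqrt 5 * ((1 - 2 * beta) * alpha powi t / sqrt (alpha + 5) * ln ((alpha + 5) / 4)
                     - (1 - 2 * alpha) * beta powi t / sqrt (beta + 5) * ln ((beta + 5) / 4))
                   = alpha powi t / sqrt (alpha + 5) * ln ((alpha + 5) / 4)
                     + beta powi t / sqrt (beta + 5) * ln ((beta + 5) / 4)"
    unfolding Luc_coeffs by (simp add: field_simps)
  show ?thesis
    using gib_sums[of 2 1] gib_sums[of 0 1] gib_sums unfolding Luc_def Fib_def Luc_value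
    by (simp only: mult_zero_left diff_zero mult_1_left) blast
qed

end
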